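(* Let $(x^k,z^k)\in\operatorname{conv}(X)\times Z$ satisfy the $z$-optimality condition $z^k\in\arg\min_{z\in Z}\|Qx^k-z\|_2$. Then for every $\omega\in Z^\perp$, $$\widehat{\phi}(\omega,x^k,z^k)\ \ge\ \phi^C\big(\omega+\rho(Qx^k-z^k)\big).$$
   Context: Standing setup: $f:\mathbb{R}^n\to\mathbb{R}$ is convex and continuously differentiable; $Q\in\mathbb{R}^{q\times n}$; $X\subset\mathbb{R}^n$ is nonempty and compact (not necessarily convex) and $\operatorname{conv}(X)$ denotes its convex hull; $Z\subseteq\mathbb{R}^q$ is a linear subspace and $Z^\perp=\{v\in\mathbb{R}^q: v^\top z=0\ \forall z\in Z\}$; $\rho>0$ is fixed. Define $\phi^C(\omega)=\min\{f(x)+\omega^\top Qx : x\in\operatorname{conv}(X)\}$, the augmented Lagrangian $L_\rho(x,z,\omega)=f(x)+\omega^\top Qx+\frac{\rho}{2}\|Qx-z\|_2^2$, and $\widehat{\phi}(\omega,x,z)=L_\rho(x,z,\omega)+\frac{\rho}{2}\|Qx-z\|_2^2$. *)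

theory Defs
  imports "HOL-Analysis.Analysis"
begin

text \<open>phi^C(w) = min { f x + w^T Q x : x in conv X }  (minimum exists since conv X is compact
  and the objective is continuous; written as Inf of the image).\<close>
definition phiC :: "(real^'n \<Rightarrow> real) \<Rightarrow> real^'n^'q \<Rightarrow> (real^'n) set \<Rightarrow> real^'q \<Rightarrow> real" where
  "phiC f Q X \<omega> = Inf ((\<lambda>x. f x + \<omega> \<bullet> (Q *v x)) ` (convex hull X))"

definition L_rho :: "(real^'n \<Rightarrow> real) \<Rightarrow> real^'n^'q \<Rightarrow> real \<Rightarrow> real^'n \<Rightarrow> real^'q \<Rightarrow> real^'q \<Rightarrow> real" where
  "L_rho f Q \<rho> x z \<omega> = f x + \<omega> \<bullet> (Q *v x) + \<rho> / 2 * (norm (Q *v x - z))\<^sup>2"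

definition phi_hat :: "(real^'n \<Rightarrow> real) \<Rightarrow> real^'n^'q \<Rightarrow> real \<Rightarrow> real^'q \<Rightarrow> real^'n \<Rightarrow> real^'q \<Rightarrow> real" where
  "phi_hat f Q \<rho> \<omega> x z = L_rho f Q \<rho> x z \<omega> + \<rho> / 2 * (norm (Q *v x - z))\<^sup>2"

end

theory Submission
  imports Defs
begin

text \<open>With \<open>r = Q xk - zk\<close>, the point \<open>xk\<close> is feasible for \<open>\<phi>\<^sup>C(\<omega> + \<rho> r)\<close>, so
  \<open>\<phi>\<^sup>C(\<omega> + \<rho> r) \<le> f xk + \<omega>\<cdot>Q xk + \<rho> r\<cdot>Q xk\<close>. Since \<open>zk\<close> is the projection of \<open>Q xk\<close>
  onto the subspace \<open>Z\<close>, the residual \<open>r\<close> is orthogonal to \<open>zk\<close>, hence \<open>r\<cdot>Q xk = \<parallel>r\<parallel>\<^sup>2\<close>,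
  and the right-hand side is exactly \<open>phi_hat \<omega> xk zk\<close>.\<close>

lemma closest_point_subspace_orthogonal:
  fixes v z :: "'a::euclidean_space"
  assumes "subspace Z" "z \<in> Z" "\<forall>y\<in>Z. norm (v - z) \<le> norm (v - y)"
  shows "(v - z) \<bullet> z = 0"
proof -
  have closest: "\<forall>y\<in>Z. dist v z \<le> dist v y"
    using assms(3) by (simp add: dist_norm)
  have "(v - z) \<bullet> (y - z) \<le> 0" if "y \<in> Z" for y
    using any_closest_point_dot[OF subspace_imp_convex closed_subspace] assms(1,2) closest that
    by blast
  from this[of 0] this[of "2 *\<^sub>R z"] show ?thesis
    using assms(1,2) by (simp add: subspace_0 subspace_scale algebra_simps)
qed

lemma phiC_le:
  assumes "continuous_on UNIV f" "compact X" "x \<in> convex hull X"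
  shows "phiC f Q X w \<le> f x + w \<bullet> (Q *v x)"
proof -
  let ?obj = "\<lambda>x. f x + w \<bullet> (Q *v x)"
  have "continuous_on (convex hull X) ?obj"
    by (intro continuous_intros continuous_on_subset[OF assms(1)] linear_continuous_on
        bounded_linear_compose[OF bounded_linear_inner_right]) auto
  moreover have "compact (convex hull X)"
    using assms(2) by (simp add: compact_convex_hull)
  ultimately have "bdd_below (?obj ` (convex hull X))"
    by (simp add: bounded_imp_bdd_below compact_imp_bounded compact_continuous_image)
  then show ?thesis
    unfolding phiC_def using assms(3) by (auto intro: cInf_lower)
qed

lemma phi_hat_eq_shifted_multiplier:
  "phi_hat f Q \<rho> \<omega> x z = f x + (\<omega> + \<rho> *\<^sub>R (Q *v x - z)) \<bullet> (Q *v x)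
     + \<rho> * ((Q *v x - z) \<bullet> (Q *v x - z) - (Q *v x - z) \<bullet> (Q *v x))"
  by (simp add: phi_hat_def L_rho_def power2_norm_eq_inner inner_add_left algebra_simps)

theorem lemma2:
  fixes f :: "real^'n \<Rightarrow> real" and Q :: "real^'n^'q"
    and X :: "(real^'n) set" and Z :: "(real^'q) set" and \<rho> :: real
    and xk :: "real^'n" and zk :: "real^'q" and \<omega> :: "real^'q"
  assumes f_convex: "convex_on UNIV f"
    and f_C1: "\<exists>g. (\<forall>x. (f has_derivative (\<lambda>h. g x \<bullet> h)) (at x)) \<and> continuous_on UNIV g"
    and X_ne: "X \<noteq> {}" and X_compact: "compact X"
    and Z_sub: "subspace Z"
    and rho_pos: "\<rho> > 0"
    and xk_in: "xk \<in> convex hull X"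
    and zk_in: "zk \<in> Z"
    and zk_opt: "\<forall>z\<in>Z. norm (Q *v xk - zk) \<le> norm (Q *v xk - z)"
    and \<omega>_in: "\<omega> \<in> orthogonal_comp Z"
  shows "phi_hat f Q \<rho> \<omega> xk zk \<ge> phiC f Q X (\<omega> + \<rho> *\<^sub>R (Q *v xk - zk))"
proof -
  let ?r = "Q *v xk - zk"
  have f_cont: "continuous_on UNIV f"
    using f_C1 by (meson continuous_at_imp_continuous_on has_derivative_continuous)
  have "?r \<bullet> zk = 0"
    using closest_point_subspace_orthogonal[OF Z_sub zk_in zk_opt] .
  then have "?r \<bullet> ?r = ?r \<bullet> (Q *v xk)"
    by (simp add: inner_diff_right)
  then have "phi_hat f Q \<rho> \<omega> xk zk = f xk + (\<omega> + \<rho> *\<^sub>R ?r) \<bullet> (Q *v xk)"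
    by (simp add: phi_hat_eq_shifted_multiplier)
  also have "\<dots> \<ge> phiC f Q X (\<omega> + \<rho> *\<^sub>R ?r)"
    using phiC_le[OF f_cont X_compact xk_in] .
  finally show ?thesis .
qed

end
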